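(* For $n\ge1$ let $\mathcal{A}_n(\lambda)=\det(\lambda I_n-N_n)$, where $N_n$ is the $n\times n$ matrix with $(N_n)_{j,i}=1$ if $i\ge j-1$ and $0$ otherwise, and set $\mathcal{A}_0(\lambda)=1$. Then $\mathcal{A}_1(\lambda)=\lambda-1$ and $$\mathcal{A}_n(\lambda)=\lambda\,\mathcal{A}_{n-1}(\lambda)-\lambda\,\mathcal{A}_{n-2}(\lambda)\qquad(n\ge2).$$ *)

theory Defs
  imports "Jordan_Normal_Form.Determinant"
begin

text \<open>The n x n matrix N_n with (N_n)_{j,i} = 1 if i >= j - 1 and 0 otherwise.
  JNF matrices are 0-indexed; the condition i >= j - 1 (row j, column i) is
  shift invariant, written here as j <= i + 1.\<close>
definition N_mat :: "nat \<Rightarrow> 'a :: comm_ring_1 mat" where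
  "N_mat n = mat n n (\<lambda>(j, i). if j \<le> i + 1 then 1 else 0)"

definition A_poly :: "nat \<Rightarrow> 'a :: comm_ring_1 \<Rightarrow> 'a" where
  "A_poly n lam = (if n = 0 then 1 else det (lam \<cdot>\<^sub>m 1\<^sub>m n - N_mat n))"

end

theory Submission
  imports Defs
begin

text \<open>Write \<open>M\<^sub>n = \<lambda>I - N\<^sub>n\<close>; its entries are \<open>\<lambda> - 1\<close> on the diagonal, \<open>-1\<close> above it and
  on the subdiagonal, and \<open>0\<close> below the subdiagonal. Expanding \<open>det M\<^sub>n\<close> along the first column
  gives \<open>(\<lambda> - 1) det M\<^sub>n\<^sub>-\<^sub>1\<close> plus the determinant of the minor obtained by deleting row 1,
  which is \<open>M\<^sub>n\<^sub>-\<^sub>1\<close> with its first row replaced by \<open>(-1, \<dots>, -1)\<close>. That first row differs from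
  the one of \<open>M\<^sub>n\<^sub>-\<^sub>1\<close> only by \<open>\<lambda>\<close> in its first entry, so by linearity in the first row the minor
  has determinant \<open>det M\<^sub>n\<^sub>-\<^sub>1 - \<lambda> det M\<^sub>n\<^sub>-\<^sub>2\<close>.\<close>

lemma det_diff_eq_sum_row_diff_cofactor:
  fixes A B :: "'a :: comm_ring_1 mat"
  assumes A: "A \<in> carrier_mat n n" and B: "B \<in> carrier_mat n n" and i: "i < n"
    and same: "\<And>k j. k < n \<Longrightarrow> j < n \<Longrightarrow> k \<noteq> i \<Longrightarrow> A $$ (k, j) = B $$ (k, j)"
  shows "det A - det B = (\<Sum>j<n. (A $$ (i, j) - B $$ (i, j)) * cofactor A i j)"
proof -
  have "mat_delete B i j = mat_delete A i j" for j
    using A B same by (intro eq_matI) (auto simp: mat_delete_def insert_index_def)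
  then have "cofactor B i j = cofactor A i j" for j
    by (simp add: cofactor_def)
  then have "det B = (\<Sum>j<n. B $$ (i, j) * cofactor A i j)"
    using laplace_expansion_row[OF B i] by simp
  moreover have "det A = (\<Sum>j<n. A $$ (i, j) * cofactor A i j)"
    using laplace_expansion_row[OF A i] .
  ultimately show ?thesis
    by (simp add: sum_subtractf algebra_simps)
qed

definition char_N :: "'a :: comm_ring_1 \<Rightarrow> nat \<Rightarrow> 'a mat" where
  "char_N lam n = lam \<cdot>\<^sub>m 1\<^sub>m n - N_mat n"

lemma char_N_carrier: "char_N lam n \<in> carrier_mat n n"
  by (auto simp: char_N_def N_mat_def)

lemma dim_char_N [simp]: "dim_row (char_N lam n) = n" "dim_col (char_N lam n) = n"
  by (simp_all add: char_N_def N_mat_def)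

lemma index_char_N [simp]:
  "i < n \<Longrightarrow> j < n \<Longrightarrow>
   char_N lam n $$ (i, j) = (if i = j then lam else 0) - (if i \<le> j + 1 then 1 else 0)"
  by (simp add: char_N_def N_mat_def)

lemma A_poly_eq_det_char_N: "A_poly n lam = det (char_N lam n)"
  using det_dim_zero[OF char_N_carrier[of lam 0]] by (simp add: A_poly_def char_N_def)

lemma det_char_N_1: "det (char_N lam 1) = lam - 1"
  by (subst det_single[OF char_N_carrier]) simp

lemma mat_delete_char_N_0_0: "mat_delete (char_N lam (Suc n)) 0 0 = char_N lam n"
  by (rule eq_matI) (auto simp: mat_delete_def insert_index_def)

lemma det_mat_delete_char_N_1_0:
  "det (mat_delete (char_N lam (Suc (Suc n))) 1 0) = det (char_N lam (Suc n)) - lam * det (char_N lam n)"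
proof -
  let ?B = "mat_delete (char_N lam (Suc (Suc n))) 1 0"
  have B: "?B \<in> carrier_mat (Suc n) (Suc n)"
    by (intro carrier_matI) simp_all
  have B_index: "?B $$ (i, j) = (if i = 0 then -1 else char_N lam (Suc n) $$ (i, j))"
    if "i < Suc n" "j < Suc n" for i j
    using that by (auto simp: mat_delete_def insert_index_def)
  have "det (char_N lam (Suc n)) - det ?B
      = (\<Sum>j<Suc n. (char_N lam (Suc n) $$ (0, j) - ?B $$ (0, j)) * cofactor (char_N lam (Suc n)) 0 j)"
    by (rule det_diff_eq_sum_row_diff_cofactor[OF char_N_carrier B]) (use B_index in auto)
  also have "\<dots> = (\<Sum>j<Suc n. if j = 0 then lam * det (char_N lam n) else 0)"
    by (rule sum.cong) (use B_index in \<open>auto simp: cofactor_def mat_delete_char_N_0_0\<close>)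
  finally show ?thesis
    by (simp add: algebra_simps)
qed

lemma det_char_N_Suc_Suc:
  "det (char_N lam (Suc (Suc n)))
     = (lam - 1) * det (char_N lam (Suc n)) + det (mat_delete (char_N lam (Suc (Suc n))) 1 0)"
proof -
  let ?M = "char_N lam (Suc (Suc n))"
  have "det ?M = (\<Sum>i<Suc (Suc n). ?M $$ (i, 0) * cofactor ?M i 0)"
    by (rule laplace_expansion_column[OF char_N_carrier]) simp
  also have "\<dots> = (\<Sum>i<Suc (Suc n). if i = 0 then (lam - 1) * det (char_N lam (Suc n))
      else if i = 1 then det (mat_delete ?M 1 0) else 0)"
    by (rule sum.cong) (auto simp: cofactor_def mat_delete_char_N_0_0)
  also have "\<dots> = (lam - 1) * det (char_N lam (Suc n)) + det (mat_delete ?M 1 0)"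
    by (simp only: sum.lessThan_Suc_shift) simp
  finally show ?thesis .
qed

theorem lemma3:
  fixes lam :: "'a :: comm_ring_1"
  shows "A_poly 1 lam = lam - 1 \<and>
         (\<forall>n\<ge>2. A_poly n lam = lam * A_poly (n - 1) lam - lam * A_poly (n - 2) lam)"
proof (intro conjI allI impI)
  show "A_poly 1 lam = lam - 1"
    unfolding A_poly_eq_det_char_N by (rule det_char_N_1)
  fix n :: nat
  assume "n \<ge> 2"
  then obtain k where n: "n = Suc (Suc k)"
    using add_2_eq_Suc le_Suc_ex by metis
  show "A_poly n lam = lam * A_poly (n - 1) lam - lam * A_poly (n - 2) lam"
    unfolding n A_poly_eq_det_char_N det_char_N_Suc_Suc det_mat_delete_char_N_1_0
    by (simp add: algebra_simps)
qed

end
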